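(* For every integer $k\ge 1$, $E_k\subseteq E_{k+1}$. That is, if a number can be condensed from every multiset of $k$ decimal digits, then it can be condensed from every multiset of $k+1$ decimal digits.
   Context: Multisets are collections of numbers in which elements may repeat; $A+B$ denotes the multiset union (multiplicities add), and $[S]$ is the set of distinct elements of $S$. For a finite nonempty multiset $S$ of real numbers, $V(S)$ ("the values condensable from $S$") is the smallest set of real numbers such that: (1) if $|S|=1$ then $S\subseteq V(S)$; (2) if $|S|\ge 2$, then for all nonempty multisets $A,B$ with $A+B=S$ and all $a\in V(A)$, $b\in V(B)$, each of $a+b,\ a-b,\ b-a,\ ab,\ a/b,\ b/a,\ a^b,\ b^a$ lies in $V(S)$ whenever it is a well-defined real number (no division by zero); (3) if $a\in V(S)$ is a nonnegative integer then $a!\in V(S)$ (so in particular $0!=1$). Let $D=\{0,1,\dots,9\}$. For $k\ge1$, $E_k=\bigcap\{V(S): S \text{ a multiset with } |S|=k,\ [S]\subseteq D\}$. *)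

theory Defs
  imports Complex_Main "HOL-Library.Multiset"
begin

text \<open>Real exponentiation a^b, as a partial operation: defined exactly when the
value is a well-defined real number (principal value), namely for a > 0 (any b),
for a = 0 with b > 0, and for a < 0 with integer exponent b.\<close>

definition rpow_defined :: "real \<Rightarrow> real \<Rightarrow> bool" where
  "rpow_defined a b \<longleftrightarrow> a > 0 \<or> (a = 0 \<and> b > 0) \<or> (a < 0 \<and> b \<in> \<int>)"

definition rpow :: "real \<Rightarrow> real \<Rightarrow> real" where
  "rpow a b = (if a > 0 then a powr b else if a = 0 then 0 else a powi \<lfloor>b\<rfloor>)"

inductive combines :: "real \<Rightarrow> real \<Rightarrow> real \<Rightarrow> bool" where
  add: "combines a b (a + b)"
| sub1: "combines a b (a - b)"
| sub2: "combines a b (b - a)"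
| mul: "combines a b (a * b)"
| div1: "b \<noteq> 0 \<Longrightarrow> combines a b (a / b)"
| div2: "a \<noteq> 0 \<Longrightarrow> combines a b (b / a)"
| pow1: "rpow_defined a b \<Longrightarrow> combines a b (rpow a b)"
| pow2: "rpow_defined b a \<Longrightarrow> combines a b (rpow b a)"

inductive condensable :: "real multiset \<Rightarrow> real \<Rightarrow> bool" where
  single: "condensable {#x#} x"
| comb: "A \<noteq> {#} \<Longrightarrow> B \<noteq> {#} \<Longrightarrow> condensable A a \<Longrightarrow> condensable B b
          \<Longrightarrow> combines a b c \<Longrightarrow> condensable (A + B) c"
| factorial: "condensable S a \<Longrightarrow> a \<in> \<nat> \<Longrightarrow> condensable S (fact (nat \<lfloor>a\<rfloor>))"

definition V :: "real multiset \<Rightarrow> real set" where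
  "V S = {x. condensable S x}"

definition digits :: "real set" where
  "digits = real ` {0..9}"

definition E :: "nat \<Rightarrow> real set" where
  "E k = \<Inter> {V S | S. size S = k \<and> set_mset S \<subseteq> digits}"

end

theory Submission
  imports Defs
begin

text \<open>Given k+1 digits, replace two of them, a and b, by the digit |a - b|, which is
condensable from a and b. The resulting k digits condense to every x in E k, and any
derivation from a multiset can be grafted: a leaf d may be replaced by any nonempty
multiset from which d is condensable.\<close>

lemma condensable_replace:
  assumes "condensable M x" and "d \<in># M" and "condensable A d" and "A \<noteq> {#}"
  shows "condensable (M - {#d#} + A) x"
  using assms
proof (induction arbitrary: d rule: condensable.induct)
  case (single x)
  then show ?case by simp
next
  case (comb A1 B1 a b c)
  have nonempty: "X + A \<noteq> {#}" for X using \<open>A \<noteq> {#}\<close> by simp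
  show ?case
  proof (cases "d \<in># A1")
    case True
    then have "condensable (A1 - {#d#} + A) a" using comb by simp
    then have "condensable ((A1 - {#d#} + A) + B1) c"
      by (rule condensable.comb[OF nonempty comb.hyps(2) _ comb.hyps(4,5)])
    then show ?thesis using True by (simp add: ac_simps)
  next
    case False
    then have "d \<in># B1" using comb by simp
    then have "condensable (B1 - {#d#} + A) b" using comb by simp
    then have "condensable (A1 + (B1 - {#d#} + A)) c"
      by (rule condensable.comb[OF comb.hyps(1) nonempty comb.hyps(3) _ comb.hyps(5)])
    then show ?thesis using \<open>d \<in># B1\<close> False by (simp add: ac_simps)
  qed
next
  case (factorial S a)
  then show ?case using condensable.factorial by blast
qed

lemma condensable_abs_diff: "condensable {#a, b#} \<bar>a - b\<bar>"
proof -
  have "combines a b \<bar>a - b\<bar>"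
    by (cases "b \<le> a") (auto intro: combines.sub1 combines.sub2)
  then have "condensable ({#a#} + {#b#}) \<bar>a - b\<bar>"
    by (intro condensable.comb) (auto intro: condensable.single)
  then show ?thesis by (simp add: add_mset_commute)
qed

lemma abs_diff_in_digits:
  assumes "a \<in> digits" and "b \<in> digits"
  shows "\<bar>a - b\<bar> \<in> digits"
proof -
  obtain i j :: nat where "a = real i" "b = real j" "i \<le> 9" "j \<le> 9"
    using assms unfolding digits_def by auto
  then have "\<bar>a - b\<bar> = real (if j \<le> i then i - j else j - i)" and
            "(if j \<le> i then i - j else j - i) \<in> {0..9}"
    by auto
  then show ?thesis unfolding digits_def by blast
qed

theorem lemma4p1:
  fixes k :: nat
  assumes "k \<ge> 1"
  shows "E k \<subseteq> E (Suc k)"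
proof
  fix x assume x: "x \<in> E k"
  have "x \<in> V S" if size: "size S = Suc k" and dig: "set_mset S \<subseteq> digits" for S
  proof -
    obtain a T where S_aT: "S = add_mset a T" and "size T = k"
      using size by (metis size_eq_Suc_imp_eq_union size_add_mset Suc_inject)
    then obtain b R where "T = add_mset b R"
      using assms by (metis multiset_cases size_empty not_one_le_zero)
    then have S: "S = add_mset a (add_mset b R)" using S_aT by simp
    have ab: "a \<in> digits" "b \<in> digits" using dig S by auto
    define S' where "S' = add_mset \<bar>a - b\<bar> R"
    have "size S' = k" using \<open>size T = k\<close> \<open>T = add_mset b R\<close> by (simp add: S'_def)
    moreover have "set_mset S' \<subseteq> digits"
      using dig S abs_diff_in_digits[OF ab] by (auto simp: S'_def)
    ultimately have "condensable S' x" using x unfolding E_def V_def by blast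
    then have "condensable (S' - {#\<bar>a - b\<bar>#} + {#a, b#}) x"
      by (rule condensable_replace) (simp_all add: S'_def condensable_abs_diff)
    then show ?thesis by (simp add: V_def S S'_def)
  qed
  then show "x \<in> E (Suc k)" unfolding E_def by blast
qed

end
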